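(* Let $G$ be a weighted finite graph and let $f_1,\ldots,f_k:V\to\mathbb{R}$ be orthonormal in $l^2(V,\mu)$. Let $F:V\to\mathbb{R}^k$, $F(v)=(f_1(v),\ldots,f_k(v))$. If $S\subseteq V$ satisfies $\mathrm{diam}(S\cap\widetilde{V}_F,\overline{d}_F)\leq r$ for some $0<r<1$, then \[ \mathcal{E}_S\leq\frac{1}{k(1-r^2)}\mathcal{E}_V. \]
   Context: $G=(V,E,w)$ is a finite undirected graph with positive symmetric edge weights, degrees $d_u=\sum_vw_{uv}$, and measure $\mu(u)=d_u$; $l^2(V,\mu)$ has inner product $(f,g)_\mu=\sum_u\mu(u)f(u)g(u)$. For $S\subseteq V$, $\mathcal{E}_S:=\sum_{u\in S}\mu(u)\|F(u)\|^2$ (Euclidean norm). $\widetilde{V}_F:=\{v\in V:F(v)\neq0\}$, and for $u,v\in\widetilde{V}_F$, \[ \overline{d}_F(u,v):=\min\left\{\left\|\tfrac{F(u)}{\|F(u)\|}-\tfrac{F(v)}{\|F(v)\|}\right\|,\left\|\tfrac{F(u)}{\|F(u)\|}+\tfrac{F(v)}{\|F(v)\|}\right\|\right\}, \] a pseudometric on $\widetilde{V}_F$; $\mathrm{diam}$ is the supremum of $\overline{d}_F$ over pairs of points of the set. *)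

theory Defs
  imports "HOL-Analysis.Analysis"
begin

text \<open>Weighted finite graph: vertex set = UNIV of a finite type 'v, weights
  w :: 'v => 'v => real (symmetric, nonnegative; w u v > 0 iff uv is an edge).
  The k orthonormal functions are indexed by a finite type 'k, k = CARD('k).\<close>

definition deg :: "('v::finite \<Rightarrow> 'v \<Rightarrow> real) \<Rightarrow> 'v \<Rightarrow> real" where
  "deg w u = (\<Sum>v\<in>UNIV. w u v)"

definition l2_inner :: "('v::finite \<Rightarrow> 'v \<Rightarrow> real) \<Rightarrow> ('v \<Rightarrow> real) \<Rightarrow> ('v \<Rightarrow> real) \<Rightarrow> real" where
  "l2_inner w f g = (\<Sum>u\<in>UNIV. deg w u * f u * g u)"

definition Fvec :: "('k::finite \<Rightarrow> 'v \<Rightarrow> real) \<Rightarrow> 'v \<Rightarrow> real ^ 'k" where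
  "Fvec f v = (\<chi> i. f i v)"

definition VF :: "('k::finite \<Rightarrow> 'v \<Rightarrow> real) \<Rightarrow> 'v set" where
  "VF f = {v. Fvec f v \<noteq> 0}"

definition dbar :: "('k::finite \<Rightarrow> 'v \<Rightarrow> real) \<Rightarrow> 'v \<Rightarrow> 'v \<Rightarrow> real" where
  "dbar f u v = min
     (norm ((1 / norm (Fvec f u)) *\<^sub>R Fvec f u - (1 / norm (Fvec f v)) *\<^sub>R Fvec f v))
     (norm ((1 / norm (Fvec f u)) *\<^sub>R Fvec f u + (1 / norm (Fvec f v)) *\<^sub>R Fvec f v))"

definition diam_dbar :: "('k::finite \<Rightarrow> 'v \<Rightarrow> real) \<Rightarrow> 'v set \<Rightarrow> real" where
  "diam_dbar f S = (if S = {} then 0 else Sup {dbar f u v | u v. u \<in> S \<and> v \<in> S})"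

definition energy :: "('v::finite \<Rightarrow> 'v \<Rightarrow> real) \<Rightarrow> ('k::finite \<Rightarrow> 'v \<Rightarrow> real) \<Rightarrow> 'v set \<Rightarrow> real" where
  "energy w f S = (\<Sum>u\<in>S. deg w u * (norm (Fvec f u))\<^sup>2)"

end

theory Submission
  imports Defs
begin

text \<open>Orthonormality makes \<open>x \<mapsto> \<Sum>\<^sub>v deg v (x \<bullet> F v)\<^sup>2\<close> the squared norm on \<open>\<real>\<^sup>k\<close>, so it is at most 1
  for a unit vector \<open>x\<close>, while the total energy is \<open>k\<close>. Choose \<open>x\<close> in the direction of \<open>F u\<close> for
  some \<open>u \<in> S\<close> with \<open>F u \<noteq> 0\<close>. The diameter bound says that every \<open>F v\<close>, \<open>v \<in> S\<close>, lies within angular distance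
  \<open>r\<close> of \<open>\<plusminus>x\<close>, hence \<open>(x \<bullet> F v)\<^sup>2 \<ge> (1 - r\<^sup>2) \<parallel>F v\<parallel>\<^sup>2\<close>; summing over \<open>S\<close> gives
  \<open>(1 - r\<^sup>2) energy S \<le> 1 = energy V / k\<close>.\<close>

lemma deg_nonneg:
  assumes "\<And>u v. 0 \<le> w u v"
  shows "0 \<le> deg w u"
  by (simp add: deg_def sum_nonneg assms)

lemma sum_deg_inner_Fvec_square:
  fixes w :: "'v::finite \<Rightarrow> 'v \<Rightarrow> real" and f :: "'k::finite \<Rightarrow> 'v \<Rightarrow> real"
  assumes orthonormal: "\<And>i j. l2_inner w (f i) (f j) = (if i = j then 1 else 0)"
  shows "(\<Sum>v\<in>UNIV. deg w v * (x \<bullet> Fvec f v)\<^sup>2) = (norm x)\<^sup>2"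
proof -
  have "(\<Sum>v\<in>UNIV. deg w v * (x \<bullet> Fvec f v)\<^sup>2)
      = (\<Sum>v\<in>UNIV. \<Sum>i\<in>UNIV. \<Sum>j\<in>UNIV. x$i * x$j * (deg w v * f i v * f j v))"
    by (simp add: inner_vec_def Fvec_def power2_eq_square sum_product sum_distrib_left
        algebra_simps)
  also have "\<dots> = (\<Sum>i\<in>UNIV. \<Sum>j\<in>UNIV. \<Sum>v\<in>UNIV. x$i * x$j * (deg w v * f i v * f j v))"
    by (subst sum.swap) (rule sum.cong[OF refl], rule sum.swap)
  also have "\<dots> = (\<Sum>i\<in>UNIV. \<Sum>j\<in>UNIV. x$i * x$j * l2_inner w (f i) (f j))"
    by (simp add: l2_inner_def sum_distrib_left)
  also have "\<dots> = (norm x)\<^sup>2"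
    by (simp add: orthonormal power2_norm_eq_inner inner_vec_def if_distrib cong: if_cong)
  finally show ?thesis .
qed

lemma energy_UNIV_eq_card:
  fixes w :: "'v::finite \<Rightarrow> 'v \<Rightarrow> real" and f :: "'k::finite \<Rightarrow> 'v \<Rightarrow> real"
  assumes orthonormal: "\<And>i j. l2_inner w (f i) (f j) = (if i = j then 1 else 0)"
  shows "energy w f UNIV = real CARD('k)"
proof -
  have "energy w f UNIV = (\<Sum>i\<in>UNIV. \<Sum>v\<in>UNIV. deg w v * f i v * f i v)"
    by (subst sum.swap)
       (simp add: energy_def power2_norm_eq_inner inner_vec_def Fvec_def sum_distrib_left
         algebra_simps)
  also have "\<dots> = (\<Sum>i\<in>UNIV. l2_inner w (f i) (f i))"
    by (simp add: l2_inner_def)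
  finally show ?thesis by (simp add: orthonormal)
qed

lemma inner_square_ge_of_norm_diff_or_sum_le:
  fixes a b :: "'a::real_inner"
  assumes "norm a = 1" "norm b = 1" "min (norm (a - b)) (norm (a + b)) \<le> r"
  shows "1 - r\<^sup>2 \<le> (a \<bullet> b)\<^sup>2"
proof -
  have "(norm (a - b))\<^sup>2 = 2 - 2 * (a \<bullet> b)" "(norm (a + b))\<^sup>2 = 2 + 2 * (a \<bullet> b)"
    using assms(1,2)
    by (simp_all add: power2_norm_eq_inner inner_diff inner_add norm_eq_1 inner_commute)
  moreover have "(norm (a - b))\<^sup>2 \<le> r\<^sup>2 \<or> (norm (a + b))\<^sup>2 \<le> r\<^sup>2"
    using assms(3) by (metis min_le_iff_disj norm_ge_zero power_mono)
  ultimately have close: "1 - r\<^sup>2 / 2 \<le> \<bar>a \<bullet> b\<bar>" by auto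
  show ?thesis
  proof (cases "0 \<le> 1 - r\<^sup>2 / 2")
    case True
    have "(1 - r\<^sup>2 / 2)\<^sup>2 = 1 - r\<^sup>2 + (r\<^sup>2 / 2)\<^sup>2"
      by (simp add: power2_diff)
    then have "1 - r\<^sup>2 \<le> (1 - r\<^sup>2 / 2)\<^sup>2" by simp
    also have "\<dots> \<le> \<bar>a \<bullet> b\<bar>\<^sup>2" using close True by (rule power_mono)
    finally show ?thesis by simp
  next
    case False
    then show ?thesis using zero_le_power2[of r] zero_le_power2[of "a \<bullet> b"] by linarith
  qed
qed

lemma scaled_inner_square_ge_of_sgn_dist_le:
  fixes a b :: "'a::real_inner"
  assumes "a \<noteq> 0" "min (norm (sgn a - sgn b)) (norm (sgn a + sgn b)) \<le> r"
  shows "(1 - r\<^sup>2) * (norm b)\<^sup>2 \<le> (sgn a \<bullet> b)\<^sup>2"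
proof (cases "b = 0")
  case False
  have "1 - r\<^sup>2 \<le> (sgn a \<bullet> sgn b)\<^sup>2"
    using assms False by (intro inner_square_ge_of_norm_diff_or_sum_le) (simp_all add: norm_sgn)
  then have "(1 - r\<^sup>2) * (norm b)\<^sup>2 \<le> (sgn a \<bullet> sgn b)\<^sup>2 * (norm b)\<^sup>2"
    by (rule mult_right_mono) simp
  also have "\<dots> = (sgn a \<bullet> b)\<^sup>2"
    using False by (simp add: sgn_div_norm field_simps)
  finally show ?thesis .
qed simp

lemma dbar_eq_sgn_dist:
  "dbar f u v = min (norm (sgn (Fvec f u) - sgn (Fvec f v))) (norm (sgn (Fvec f u) + sgn (Fvec f v)))"
  by (simp add: dbar_def sgn_div_norm divide_inverse_commute)

lemma dbar_le_diam_dbar: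
  fixes f :: "'k::finite \<Rightarrow> 'v::finite \<Rightarrow> real"
  assumes "u \<in> T" "v \<in> T"
  shows "dbar f u v \<le> diam_dbar f T"
proof -
  let ?D = "{dbar f u v | u v. u \<in> T \<and> v \<in> T}"
  have "?D \<subseteq> case_prod (dbar f) ` UNIV" by auto
  then have "finite ?D" by (rule finite_subset) simp
  moreover have "dbar f u v \<in> ?D" using assms by blast
  ultimately show ?thesis using assms by (auto simp: diam_dbar_def le_cSup_finite)
qed

lemma energy_le_of_diam_dbar:
  fixes w :: "'v::finite \<Rightarrow> 'v \<Rightarrow> real" and f :: "'k::finite \<Rightarrow> 'v \<Rightarrow> real"
  assumes w_nonneg: "\<And>u v. 0 \<le> w u v"
    and orthonormal: "\<And>i j. l2_inner w (f i) (f j) = (if i = j then 1 else 0)"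
    and diam: "diam_dbar f (S \<inter> VF f) \<le> r" and r_lt1: "r\<^sup>2 < 1"
  shows "(1 - r\<^sup>2) * energy w f S \<le> 1"
proof (cases "S \<inter> VF f = {}")
  case True
  then have "energy w f S = 0" by (auto simp: energy_def VF_def intro!: sum.neutral)
  then show ?thesis by simp
next
  case False
  then obtain u where u: "u \<in> S \<inter> VF f" by blast
  define x where "x = sgn (Fvec f u)"
  have "(1 - r\<^sup>2) * (deg w v * (norm (Fvec f v))\<^sup>2) \<le> deg w v * (x \<bullet> Fvec f v)\<^sup>2"
    if "v \<in> S" for v
  proof (cases "v \<in> VF f")
    case True
    have "dbar f u v \<le> r"
      using dbar_le_diam_dbar[of u "S \<inter> VF f" v f] u True that diam by simp
    then have "(1 - r\<^sup>2) * (norm (Fvec f v))\<^sup>2 \<le> (x \<bullet> Fvec f v)\<^sup>2"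
      using u unfolding x_def
      by (intro scaled_inner_square_ge_of_sgn_dist_le) (auto simp: VF_def dbar_eq_sgn_dist)
    from mult_left_mono[OF this deg_nonneg[of w, OF w_nonneg]] show ?thesis
      by (simp only: mult.left_commute)
  qed (simp add: VF_def)
  then have "(1 - r\<^sup>2) * energy w f S \<le> (\<Sum>v\<in>S. deg w v * (x \<bullet> Fvec f v)\<^sup>2)"
    unfolding energy_def sum_distrib_left by (rule sum_mono)
  also have "\<dots> \<le> (\<Sum>v\<in>UNIV. deg w v * (x \<bullet> Fvec f v)\<^sup>2)"
    by (rule sum_mono2) (simp_all add: deg_nonneg[of w, OF w_nonneg])
  also have "\<dots> = 1"
    using u by (simp add: sum_deg_inner_Fvec_square[OF orthonormal] x_def norm_sgn VF_def)
  finally show ?thesis .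
qed

theorem lemma5p2:
  fixes w :: "'v::finite \<Rightarrow> 'v \<Rightarrow> real"
    and f :: "'k::finite \<Rightarrow> 'v \<Rightarrow> real"
    and S :: "'v set" and r :: real
  assumes w_sym: "\<And>u v. w u v = w v u"
    and w_nonneg: "\<And>u v. 0 \<le> w u v"
    and orthonormal: "\<And>i j. l2_inner w (f i) (f j) = (if i = j then 1 else 0)"
    and diam: "diam_dbar f (S \<inter> VF f) \<le> r"
    and r_pos: "0 < r" and r_lt1: "r < 1"
  shows "energy w f S \<le> 1 / (real CARD('k) * (1 - r\<^sup>2)) * energy w f UNIV"
proof -
  have "r\<^sup>2 < 1" using r_pos r_lt1 by (simp add: power_less_one_iff)
  with energy_le_of_diam_dbar[OF w_nonneg orthonormal diam]
  have "energy w f S \<le> 1 / (1 - r\<^sup>2)"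
    by (simp add: pos_le_divide_eq mult.commute)
  also have "\<dots> = 1 / (real CARD('k) * (1 - r\<^sup>2)) * energy w f UNIV"
    by (simp add: energy_UNIV_eq_card[OF orthonormal])
  finally show ?thesis .
qed

end
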